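(* If $(A,W)$ is a $T_1$ Pratt comonoid with $W$ countably infinite, then there exist crosswords over $W$ with infinitely many distinct rows and infinitely many distinct columns.
   Context: A Pratt comonoid is a pair $(A,W)$ where $A$ is a set and $W$ is a set of subsets of $A$ such that (i) $\emptyset\in W$ and $A\in W$; (ii) whenever $C\subseteq A\times A$ is such that for every $a\in A$ both the $a$-th row $\{b\mid (a,b)\in C\}$ and the $a$-th column $\{b\mid (b,a)\in C\}$ belong to $W$ (such $C$ is called a crossword over $W$), the diagonal $\{b\mid (b,b)\in C\}$ also belongs to $W$. $(A,W)$ is $T_1$ if for all distinct $a,b\in A$ some member of $W$ contains $a$ but not $b$. *)

theory Defs
  imports Main "HOL-Library.Countable_Set"
begin

definition row :: "('a \<times> 'a) set \<Rightarrow> 'a \<Rightarrow> 'a set" where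
  "row C a = {b. (a, b) \<in> C}"

definition col :: "('a \<times> 'a) set \<Rightarrow> 'a \<Rightarrow> 'a set" where
  "col C a = {b. (b, a) \<in> C}"

definition diag :: "('a \<times> 'a) set \<Rightarrow> 'a set" where
  "diag C = {b. (b, b) \<in> C}"

definition crossword :: "'a set \<Rightarrow> 'a set set \<Rightarrow> ('a \<times> 'a) set \<Rightarrow> bool" where
  "crossword A W C \<longleftrightarrow> C \<subseteq> A \<times> A \<and> (\<forall>a\<in>A. row C a \<in> W \<and> col C a \<in> W)"

definition pratt_comonoid :: "'a set \<Rightarrow> 'a set set \<Rightarrow> bool" where
  "pratt_comonoid A W \<longleftrightarrow> W \<subseteq> Pow A \<and> {} \<in> W \<and> A \<in> W \<and>
     (\<forall>C. crossword A W C \<longrightarrow> diag C \<in> W)"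

definition pratt_T1 :: "'a set \<Rightarrow> 'a set set \<Rightarrow> bool" where
  "pratt_T1 A W \<longleftrightarrow> (\<forall>a\<in>A. \<forall>b\<in>A. a \<noteq> b \<longrightarrow> (\<exists>U\<in>W. a \<in> U \<and> b \<notin> U))"

end

theory Submission
  imports Defs
begin

(*
  Diagonals of the crosswords U \<times> V and U \<times> A \<union> A \<times> V show that W is closed under
  finite intersections and unions.

  An infinite family of pairwise disjoint nonempty members of W yields the crossword
  \<Union>X. X \<times> X, whose rows and columns are the blocks X; infinitely many singletons in W give
  such a family. If infinitely many co-singletons A - {x} lie in W, deleting the corresponding
  points from the diagonal of A \<times> A works. Otherwise fix b with {b} \<notin> W and x with
  A - {x} \<notin> W, and enumerate W. The unions E n of the first n members avoiding x increase
  and never stabilise: by T1 a stable value would be A - {x}.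

  If every member of W missing b is disjoint from some neighbourhood of b, then, since {b} is
  not open, a nonempty open piece can be split off a shrinking neighbourhood of b again and
  again, giving an infinite disjoint family. Otherwise some G \<in> W missing b meets every
  neighbourhood of b, and the intersections M n of G with the first n neighbourhoods of b form a
  decreasing chain of nonempty members of W with empty intersection. In the crossword
  \<Union>n. M n \<times> E n every nonempty row is some E k, and the column of y is M l for the
  first l with y \<in> E l; the strict growth of E and shrinking of M make both families
  infinite.
*)

lemma pratt_comonoid_subset_Pow: "pratt_comonoid A W \<Longrightarrow> W \<subseteq> Pow A"
  and pratt_comonoid_empty: "pratt_comonoid A W \<Longrightarrow> {} \<in> W"
  and pratt_comonoid_carrier: "pratt_comonoid A W \<Longrightarrow> A \<in> W"
  and pratt_comonoid_diag: "pratt_comonoid A W \<Longrightarrow> crossword A W C \<Longrightarrow> diag C \<in> W"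
  unfolding pratt_comonoid_def by auto

lemma pratt_comonoid_Int:
  assumes pc: "pratt_comonoid A W" and "U \<in> W" "V \<in> W"
  shows "U \<inter> V \<in> W"
proof -
  have "row (U \<times> V) a = (if a \<in> U then V else {})"
    and "col (U \<times> V) a = (if a \<in> V then U else {})" for a
    by (auto simp: row_def col_def)
  then have "crossword A W (U \<times> V)"
    using assms pratt_comonoid_subset_Pow[OF pc] pratt_comonoid_empty[OF pc]
    by (auto simp: crossword_def)
  moreover have "diag (U \<times> V) = U \<inter> V"
    by (auto simp: diag_def)
  ultimately show ?thesis
    using pratt_comonoid_diag[OF pc] by metis
qed

lemma pratt_comonoid_Un:
  assumes pc: "pratt_comonoid A W" and "U \<in> W" "V \<in> W"
  shows "U \<union> V \<in> W"
proof -
  have "U \<subseteq> A" "V \<subseteq> A"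
    using assms pratt_comonoid_subset_Pow[OF pc] by auto
  then have "row (U \<times> A \<union> A \<times> V) a = (if a \<in> U then A else V)"
    and "col (U \<times> A \<union> A \<times> V) a = (if a \<in> V then A else U)"
    if "a \<in> A" for a
    using that by (auto simp: row_def col_def)
  moreover have "crossword A W (U \<times> A \<union> A \<times> V)"
    using calculation assms \<open>U \<subseteq> A\<close> \<open>V \<subseteq> A\<close> pratt_comonoid_carrier[OF pc]
    by (auto simp: crossword_def)
  moreover have "diag (U \<times> A \<union> A \<times> V) = U \<union> V"
    using \<open>U \<subseteq> A\<close> \<open>V \<subseteq> A\<close> by (auto simp: diag_def)
  ultimately show ?thesis
    using pratt_comonoid_diag[OF pc] by metis
qed

lemma pratt_comonoid_Union:
  assumes pc: "pratt_comonoid A W" and "finite F" "F \<subseteq> W"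
  shows "\<Union>F \<in> W"
  using assms(2,3)
  by (induction F rule: finite_induct)
    (auto intro: pratt_comonoid_Un[OF pc] pratt_comonoid_empty[OF pc])

lemma pratt_comonoid_Inter:
  assumes pc: "pratt_comonoid A W" and "finite F" "F \<subseteq> W"
  shows "A \<inter> \<Inter>F \<in> W"
  using assms(2,3)
proof (induction F rule: finite_induct)
  case empty
  then show ?case using pratt_comonoid_carrier[OF pc] by simp
next
  case (insert U F)
  then have "U \<inter> (A \<inter> \<Inter>F) \<in> W"
    by (intro pratt_comonoid_Int[OF pc, of U]) simp_all
  then show ?case
    by (simp add: Int_left_commute)
qed

lemma pratt_T1D:
  "pratt_T1 A W \<Longrightarrow> a \<in> A \<Longrightarrow> b \<in> A \<Longrightarrow> a \<noteq> b \<Longrightarrow> \<exists>U\<in>W. a \<in> U \<and> b \<notin> U"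
  unfolding pratt_T1_def by blast

lemma infinite_if_no_maximal:
  fixes S :: "'b::order set"
  assumes "S \<noteq> {}" and "\<And>s. s \<in> S \<Longrightarrow> \<exists>t\<in>S. s < t"
  shows "infinite S"
  using assms finite_has_maximal[of S] by (metis order_less_imp_le order_less_irrefl)

lemma infinite_if_no_minimal:
  fixes S :: "'b::order set"
  assumes "S \<noteq> {}" and "\<And>s. s \<in> S \<Longrightarrow> \<exists>t\<in>S. t < s"
  shows "infinite S"
  using assms finite_has_minimal[of S] by (metis order_less_imp_le order_less_irrefl)

lemma crossword_of_cosingletons:
  assumes "A \<in> W" and "S \<subseteq> A" "infinite S" and "\<And>x. x \<in> S \<Longrightarrow> A - {x} \<in> W"
  shows "\<exists>C. crossword A W C \<and> infinite (row C ` A) \<and> infinite (col C ` A)"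
proof -
  let ?C = "A \<times> A - Id_on S"
  have row: "row ?C x = (if x \<in> S then A - {x} else A)"
    and col: "col ?C x = row ?C x" if "x \<in> A" for x
    using that \<open>S \<subseteq> A\<close> by (auto simp: row_def col_def)
  have "inj_on (\<lambda>x. A - {x}) S"
    using \<open>S \<subseteq> A\<close> by (auto simp: inj_on_def)
  then have "infinite ((\<lambda>x. A - {x}) ` S)"
    using \<open>infinite S\<close> finite_imageD by blast
  moreover have "(\<lambda>x. A - {x}) ` S \<subseteq> row ?C ` A"
    using row \<open>S \<subseteq> A\<close> by force
  ultimately have "infinite (row ?C ` A)"
    using finite_subset by blast
  moreover have "col ?C ` A = row ?C ` A"
    using col by simp
  moreover have "crossword A W ?C"
    using assms row col by (auto simp: crossword_def)
  ultimately show ?thesis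
    by auto
qed

lemma crossword_of_disjoint_family:
  assumes W: "W \<subseteq> Pow A" "{} \<in> W"
    and \<D>: "\<D> \<subseteq> W" "infinite \<D>" "{} \<notin> \<D>" "pairwise disjnt \<D>"
  shows "\<exists>C. crossword A W C \<and> infinite (row C ` A) \<and> infinite (col C ` A)"
proof -
  let ?C = "\<Union>X\<in>\<D>. X \<times> X"
  have row_block: "row ?C x = X" if "X \<in> \<D>" "x \<in> X" for x X
  proof -
    have "Y = X" if "Y \<in> \<D>" "x \<in> Y" for Y
      using that \<open>X \<in> \<D>\<close> \<open>x \<in> X\<close> \<D>(4) unfolding pairwise_def disjnt_def by blast
    then show ?thesis
      using that unfolding row_def by blast
  qed
  have row_in: "row ?C x \<in> W" for x
  proof (cases "\<exists>X\<in>\<D>. x \<in> X")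
    case True
    then show ?thesis using row_block \<D>(1) by blast
  next
    case False
    then have "row ?C x = {}" unfolding row_def by blast
    then show ?thesis using W(2) by simp
  qed
  have col: "col ?C x = row ?C x" for x
    by (auto simp: row_def col_def)
  have "\<D> \<subseteq> row ?C ` A"
  proof
    fix X assume "X \<in> \<D>"
    moreover have "X \<noteq> {}" "X \<subseteq> A"
      using \<open>X \<in> \<D>\<close> W(1) \<D>(1,3) by auto
    ultimately obtain x where "x \<in> X" "x \<in> A"
      by auto
    then have "X = row ?C x"
      using row_block[OF \<open>X \<in> \<D>\<close>] by simp
    with \<open>x \<in> A\<close> show "X \<in> row ?C ` A"
      by (rule rev_image_eqI)
  qed
  then have "infinite (row ?C ` A)"
    using \<D>(2) finite_subset by blast
  moreover have "?C \<subseteq> A \<times> A"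
    using W(1) \<D>(1) by blast
  then have "crossword A W ?C"
    using row_in by (simp add: crossword_def col)
  ultimately show ?thesis
    by (auto simp: col)
qed

lemma crossword_of_singletons:
  assumes "W \<subseteq> Pow A" "{} \<in> W" and "infinite {x\<in>A. {x} \<in> W}"
  shows "\<exists>C. crossword A W C \<and> infinite (row C ` A) \<and> infinite (col C ` A)"
proof (rule crossword_of_disjoint_family[OF assms(1,2)])
  let ?\<D> = "(\<lambda>x. {x}) ` {x\<in>A. {x} \<in> W}"
  show "infinite ?\<D>"
    using assms(3) finite_imageD[of "\<lambda>x. {x}"] by (auto simp: inj_on_def)
  show "pairwise disjnt ?\<D>"
    by (auto simp: pairwise_def disjnt_def)
qed auto

lemma row_chain_product:
  fixes M E :: "nat \<Rightarrow> 'a set"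
  assumes "antimono M" "mono E" "\<Inter>(range M) = {}" "x \<in> M n"
  shows "\<exists>k\<ge>n. row (\<Union>i. M i \<times> E i) x = E k"
proof -
  obtain N where "x \<notin> M N"
    using assms(3) by blast
  then have "i < N" if "x \<in> M i" for i
    using that antimonoD[OF assms(1), of N i] by (meson not_less subsetD)
  then have "finite {i. x \<in> M i}"
    by (meson finite_nat_set_iff_bounded mem_Collect_eq)
  define k where "k = Max {i. x \<in> M i}"
  have "x \<in> M k" and le_k: "\<And>i. x \<in> M i \<Longrightarrow> i \<le> k"
    unfolding k_def using \<open>finite {i. x \<in> M i}\<close> assms(4) Max_in[of "{i. x \<in> M i}"] by auto
  have "row (\<Union>i. M i \<times> E i) x = E k"
    using \<open>x \<in> M k\<close> le_k monoD[OF assms(2)] by (auto simp: row_def)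
  with le_k[OF assms(4)] show ?thesis
    by blast
qed

lemma col_chain_product:
  fixes M E :: "nat \<Rightarrow> 'a set"
  assumes "antimono M" "y \<in> E n"
  shows "col (\<Union>i. M i \<times> E i) y = M (LEAST i. y \<in> E i)"
proof -
  have "y \<in> E (LEAST i. y \<in> E i)" and "\<And>i. y \<in> E i \<Longrightarrow> (LEAST i. y \<in> E i) \<le> i"
    using assms(2) by (auto intro: LeastI Least_le)
  then show ?thesis
    using antimonoD[OF assms(1)] by (auto simp: col_def)
qed

lemma infinite_rows_chain_product:
  fixes M E :: "nat \<Rightarrow> 'a set"
  assumes "range M \<subseteq> Pow A" "antimono M" "mono E" "\<And>n. M n \<noteq> {}" "\<Inter>(range M) = {}"
    and "\<And>n. \<exists>k. E n \<subset> E k"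
  shows "infinite (row (\<Union>i. M i \<times> E i) ` A)"
proof (rule infinite_if_no_maximal)
  let ?C = "\<Union>i. M i \<times> E i"
  have row_E: "\<exists>k\<ge>n. z \<in> A \<and> row ?C z = E k" if "z \<in> M n" for z n
    using row_chain_product[OF assms(2,3,5) that] that assms(1) by blast
  show "row ?C ` A \<noteq> {}"
    using row_E assms(4) by blast
  fix s assume "s \<in> row ?C ` A"
  then obtain x where "s = row ?C x" by blast
  have "\<exists>n. s \<subseteq> E n"
  proof (cases "\<exists>n. x \<in> M n")
    case True
    then show ?thesis using row_E \<open>s = row ?C x\<close> by blast
  next
    case False
    then show ?thesis using \<open>s = row ?C x\<close> by (auto simp: row_def)
  qed
  then obtain n k where "s \<subseteq> E n" "E n \<subset> E k"
    using assms(6) by blast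
  obtain z where "z \<in> M k"
    using assms(4) by blast
  then obtain k' where "k \<le> k'" "z \<in> A" "row ?C z = E k'"
    using row_E by blast
  have "s < row ?C z"
    using \<open>s \<subseteq> E n\<close> \<open>E n \<subset> E k\<close> monoD[OF assms(3) \<open>k \<le> k'\<close>] \<open>row ?C z = E k'\<close>
    by auto
  then show "\<exists>t\<in>row ?C ` A. s < t"
    using \<open>z \<in> A\<close> by blast
qed

lemma antimono_strict_below:
  fixes M :: "nat \<Rightarrow> 'a set"
  assumes "antimono M" "M n \<noteq> {}" "\<Inter>(range M) = {}"
  shows "\<exists>k. M k \<subset> M n"
proof -
  obtain x where "x \<in> M n"
    using assms(2) by blast
  moreover obtain j where "x \<notin> M j"
    using assms(3) by blast
  ultimately have "M (max j n) \<subset> M n"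
    using antimonoD[OF assms(1), of j "max j n"] antimonoD[OF assms(1), of n "max j n"] by auto
  then show ?thesis ..
qed

lemma col_below_chain_product:
  fixes M E :: "nat \<Rightarrow> 'a set"
  assumes "range E \<subseteq> Pow A" "antimono M" "mono E" "\<And>n. M n \<noteq> {}" "\<Inter>(range M) = {}"
    and "\<And>n. \<exists>k. E n \<subset> E k"
  shows "\<exists>t\<in>col (\<Union>i. M i \<times> E i) ` A - {{}}. t \<subset> M n"
proof -
  obtain k where "M k \<subset> M n"
    using antimono_strict_below[OF assms(2,4,5)] by blast
  obtain j where "E k \<subset> E j"
    using assms(6) by blast
  then obtain z where "z \<in> E j" "z \<notin> E k"
    by blast
  define l where "l = (LEAST i. z \<in> E i)"
  have "z \<in> E l"
    unfolding l_def using \<open>z \<in> E j\<close> by (rule LeastI)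
  then have "k < l"
    using \<open>z \<notin> E k\<close> monoD[OF assms(3)] by (meson not_less subsetD)
  have "col (\<Union>i. M i \<times> E i) z = M l"
    unfolding l_def using col_chain_product[of M z E j] assms(2) \<open>z \<in> E j\<close> by simp
  moreover have "M l \<subseteq> M k"
    using antimonoD[OF assms(2)] \<open>k < l\<close> by simp
  moreover have "z \<in> A"
    using \<open>z \<in> E j\<close> assms(1) by blast
  ultimately show ?thesis
    using \<open>M k \<subset> M n\<close> assms(4)[of l] by blast
qed

lemma infinite_cols_chain_product:
  fixes M E :: "nat \<Rightarrow> 'a set"
  assumes "range E \<subseteq> Pow A" "antimono M" "mono E" "\<And>n. M n \<noteq> {}" "\<Inter>(range M) = {}"
    and "\<And>n. \<exists>k. E n \<subset> E k"
  shows "infinite (col (\<Union>i. M i \<times> E i) ` A)"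
proof -
  let ?C = "\<Union>i. M i \<times> E i"
  note col_below = col_below_chain_product[OF assms]
  have "infinite (col ?C ` A - {{}})"
  proof (rule infinite_if_no_minimal)
    show "col ?C ` A - {{}} \<noteq> {}"
      using col_below[of 0] by auto
    fix s assume "s \<in> col ?C ` A - {{}}"
    then obtain y n where "s = col ?C y" "y \<in> E n"
      by (auto simp: col_def)
    then have "s = M (LEAST i. y \<in> E i)"
      using col_chain_product[of M y E n] assms(2) by simp
    then show "\<exists>t\<in>col ?C ` A - {{}}. t < s"
      using col_below by simp
  qed
  then show ?thesis
    by (meson finite_Diff)
qed

lemma crossword_of_chains:
  fixes M E :: "nat \<Rightarrow> 'a set"
  assumes W: "W \<subseteq> Pow A" "{} \<in> W" "range M \<subseteq> W" "range E \<subseteq> W"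
    and "antimono M" "mono E" "\<And>n. M n \<noteq> {}" "\<Inter>(range M) = {}" "\<And>n. \<exists>k. E n \<subset> E k"
  shows "\<exists>C. crossword A W C \<and> infinite (row C ` A) \<and> infinite (col C ` A)"
proof (intro exI conjI)
  let ?C = "\<Union>i. M i \<times> E i"
  have row_in: "row ?C x \<in> W" for x
  proof (cases "\<exists>n. x \<in> M n")
    case True
    then obtain n where "x \<in> M n" ..
    then obtain k where "row ?C x = E k"
      using row_chain_product[OF assms(5,6,8)] by blast
    then show ?thesis
      using W(4) by auto
  next
    case False
    then show ?thesis
      using W(2) by (simp add: row_def)
  qed
  have col_in: "col ?C y \<in> W" for y
  proof (cases "\<exists>n. y \<in> E n")
    case True
    then obtain n where "y \<in> E n" ..
    then show ?thesis
      using col_chain_product[OF assms(5)] W(3) by auto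
  next
    case False
    then show ?thesis
      using W(2) by (simp add: col_def)
  qed
  have "range M \<subseteq> Pow A" "range E \<subseteq> Pow A"
    using W(1,3,4) by auto
  then have "?C \<subseteq> A \<times> A"
    by auto
  with row_in col_in show "crossword A W ?C"
    by (simp add: crossword_def)
  show "infinite (row ?C ` A)"
    using infinite_rows_chain_product[OF \<open>range M \<subseteq> Pow A\<close> assms(5-9)] .
  show "infinite (col ?C ` A)"
    using infinite_cols_chain_product[OF \<open>range E \<subseteq> Pow A\<close> assms(5-9)] .
qed

lemma infinite_disjoint_family_by_splitting:
  assumes "Q P\<^sub>0"
    and "\<And>P. Q P \<Longrightarrow> \<exists>D P'. D \<in> W \<and> D \<noteq> {} \<and> D \<subseteq> P \<and> Q P' \<and> P' \<subseteq> P \<and> D \<inter> P' = {}"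
  shows "\<exists>\<D>\<subseteq>W. infinite \<D> \<and> {} \<notin> \<D> \<and> pairwise disjnt \<D>"
proof -
  obtain piece rest where split:
    "\<And>P. Q P \<Longrightarrow> piece P \<in> W \<and> piece P \<noteq> {} \<and> piece P \<subseteq> P \<and> Q (rest P) \<and> rest P \<subseteq> P
       \<and> piece P \<inter> rest P = {}"
    using assms(2) by metis
  define P where "P n = (rest ^^ n) P\<^sub>0" for n
  define D where "D n = piece (P n)" for n
  have Q: "Q (P n)" for n
    by (induction n) (simp_all add: P_def assms(1) split)
  have "antimono P"
    unfolding antimono_iff_le_Suc using split[OF Q] by (simp add: P_def)
  have D_disjoint: "D m \<inter> D n = {}" if "m < n" for m n
  proof -
    have "D n \<subseteq> P (Suc m)"
      using split[OF Q, of n] antimonoD[OF \<open>antimono P\<close>, of "Suc m" n] that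
      unfolding D_def by auto
    then show ?thesis
      using split[OF Q, of m] unfolding D_def P_def by auto
  qed
  have D_nonempty: "D n \<noteq> {}" for n
    using split[OF Q] by (simp add: D_def)
  have "inj D"
  proof (rule injI)
    fix m n assume "D m = D n"
    then show "m = n"
      using D_disjoint[of m n] D_disjoint[of n m] D_nonempty[of m] by (metis Int_absorb linorder_neqE_nat)
  qed
  moreover have "pairwise disjnt (range D)"
    unfolding pairwise_def disjnt_def
    using D_disjoint by (metis Int_commute linorder_neqE_nat rangeE)
  moreover have "range D \<subseteq> W"
    using split[OF Q] by (auto simp: D_def)
  moreover have "{} \<notin> range D"
    using D_nonempty by (metis rangeE)
  ultimately show ?thesis
    using range_inj_infinite by blast
qed

lemma pratt_comonoid_splitting_disjoint_family:
  assumes pc: "pratt_comonoid A W" and T1: "pratt_T1 A W"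
    and "b \<in> A" "{b} \<notin> W"
    and separated: "\<And>G. G \<in> W \<Longrightarrow> b \<notin> G \<Longrightarrow> \<exists>F\<in>W. b \<in> F \<and> F \<inter> G = {}"
  shows "\<exists>\<D>\<subseteq>W. infinite \<D> \<and> {} \<notin> \<D> \<and> pairwise disjnt \<D>"
proof (rule infinite_disjoint_family_by_splitting[where Q = "\<lambda>P. P \<in> W \<and> b \<in> P"])
  show "A \<in> W \<and> b \<in> A"
    using pratt_comonoid_carrier[OF pc] \<open>b \<in> A\<close> by simp
  fix P assume P: "P \<in> W \<and> b \<in> P"
  then have "P \<noteq> {b}"
    using \<open>{b} \<notin> W\<close> by auto
  with P obtain c where "c \<in> P" "c \<noteq> b"
    by auto
  moreover have "c \<in> A"
    using \<open>c \<in> P\<close> P pratt_comonoid_subset_Pow[OF pc] by auto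
  ultimately obtain G where G: "G \<in> W" "c \<in> G" "b \<notin> G"
    using pratt_T1D[OF T1 _ \<open>b \<in> A\<close>] by blast
  then obtain F where F: "F \<in> W" "b \<in> F" "F \<inter> G = {}"
    using separated by blast
  have "G \<inter> P \<in> W" "P \<inter> F \<in> W"
    using pratt_comonoid_Int[OF pc] G F P by auto
  then show "\<exists>D P'. D \<in> W \<and> D \<noteq> {} \<and> D \<subseteq> P \<and> (P' \<in> W \<and> b \<in> P') \<and> P' \<subseteq> P \<and> D \<inter> P' = {}"
    using G F P \<open>c \<in> P\<close> by (intro exI[of _ "G \<inter> P"] exI[of _ "P \<inter> F"]) auto
qed

lemma pratt_comonoid_increasing_chain:
  assumes pc: "pratt_comonoid A W" and T1: "pratt_T1 A W" and "countable W"
    and "x \<in> A" "A - {x} \<notin> W"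
  shows "\<exists>E :: nat \<Rightarrow> 'a set. range E \<subseteq> W \<and> mono E \<and> (\<forall>n. \<exists>k. E n \<subset> E k)"
proof -
  define f where "f = from_nat_into W"
  have "range f = W"
    unfolding f_def using pratt_comonoid_empty[OF pc] \<open>countable W\<close>
    by (intro range_from_nat_into) auto
  define E where "E n = \<Union>(f ` {i. i \<le> n \<and> x \<notin> f i})" for n
  have E_in: "E n \<in> W" for n
    unfolding E_def by (rule pratt_comonoid_Union[OF pc]) (use \<open>range f = W\<close> in auto)
  have "mono E"
    unfolding E_def by (intro monoI) (auto intro: le_trans)
  have E_grows: "\<exists>k. E n \<subset> E k" for n
  proof (rule ccontr)
    assume "\<nexists>k. E n \<subset> E k"
    then have E_le: "E k \<subseteq> E n" for k
      using monoD[OF \<open>mono E\<close>] by (metis nle_le psubsetI)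
    have "E n = A - {x}"
    proof
      show "E n \<subseteq> A - {x}"
        unfolding E_def using \<open>range f = W\<close> pratt_comonoid_subset_Pow[OF pc] by blast
      show "A - {x} \<subseteq> E n"
      proof
        fix y assume "y \<in> A - {x}"
        then obtain U where "U \<in> W" "y \<in> U" "x \<notin> U"
          using pratt_T1D[OF T1 _ \<open>x \<in> A\<close>] by blast
        then obtain i where "U = f i" "x \<notin> f i"
          using \<open>range f = W\<close> by blast
        then have "y \<in> E i"
          unfolding E_def using \<open>y \<in> U\<close> by blast
        then show "y \<in> E n"
          using E_le by blast
      qed
    qed
    then show False
      using E_in \<open>A - {x} \<notin> W\<close> by metis
  qed
  show ?thesis
    using E_in \<open>mono E\<close> E_grows by (auto intro!: exI[where x = E])
qed

lemma pratt_comonoid_decreasing_chain: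
  assumes pc: "pratt_comonoid A W" and T1: "pratt_T1 A W" and "countable W"
    and "b \<in> A" "G \<in> W" "b \<notin> G" and meets: "\<And>F. F \<in> W \<Longrightarrow> b \<in> F \<Longrightarrow> F \<inter> G \<noteq> {}"
  shows "\<exists>M :: nat \<Rightarrow> 'a set. range M \<subseteq> W \<and> antimono M \<and> (\<forall>n. M n \<noteq> {}) \<and> \<Inter>(range M) = {}"
proof -
  define f where "f = from_nat_into W"
  have "range f = W"
    unfolding f_def using pratt_comonoid_empty[OF pc] \<open>countable W\<close>
    by (intro range_from_nat_into) auto
  define N where "N n = A \<inter> \<Inter>(f ` {i. i \<le> n \<and> b \<in> f i})" for n
  define M where "M n = G \<inter> N n" for n
  have N_in: "N n \<in> W" for n
    unfolding N_def by (rule pratt_comonoid_Inter[OF pc]) (use \<open>range f = W\<close> in auto)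
  then have M_in: "M n \<in> W" for n
    unfolding M_def using pratt_comonoid_Int[OF pc \<open>G \<in> W\<close>] by auto
  have "antimono M"
    unfolding M_def N_def by (intro antimonoI) auto
  have M_nonempty: "M n \<noteq> {}" for n
  proof -
    have "b \<in> N n"
      unfolding N_def using \<open>b \<in> A\<close> by auto
    then show ?thesis
      unfolding M_def using meets[OF N_in] by (simp add: Int_commute)
  qed
  have "\<Inter>(range M) = {}"
  proof (rule equals0I)
    fix y assume "y \<in> \<Inter>(range M)"
    then have "y \<in> G" "y \<noteq> b" "y \<in> A"
      using \<open>b \<notin> G\<close> \<open>G \<in> W\<close> pratt_comonoid_subset_Pow[OF pc] unfolding M_def by auto
    then obtain U where "U \<in> W" "b \<in> U" "y \<notin> U"
      using pratt_T1D[OF T1 \<open>b \<in> A\<close>] by blast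
    then obtain i where "U = f i"
      using \<open>range f = W\<close> by blast
    then have "y \<notin> M i"
      unfolding M_def N_def using \<open>b \<in> U\<close> \<open>y \<notin> U\<close> by blast
    then show False
      using \<open>y \<in> \<Inter>(range M)\<close> by blast
  qed
  then show ?thesis
    using M_in \<open>antimono M\<close> M_nonempty by (auto intro!: exI[where x = M])
qed

lemma pratt_comonoid_crossword_if_singleton_and_cosingleton_missing:
  assumes pc: "pratt_comonoid A W" and T1: "pratt_T1 A W" and "countable W"
    and "b \<in> A" "{b} \<notin> W" and "x \<in> A" "A - {x} \<notin> W"
  shows "\<exists>C. crossword A W C \<and> infinite (row C ` A) \<and> infinite (col C ` A)"
proof -
  note W = pratt_comonoid_subset_Pow[OF pc] pratt_comonoid_empty[OF pc]
  obtain E :: "nat \<Rightarrow> 'a set" where E: "range E \<subseteq> W" "mono E" "\<And>n. \<exists>k. E n \<subset> E k"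
    using pratt_comonoid_increasing_chain[OF pc T1 \<open>countable W\<close> \<open>x \<in> A\<close> \<open>A - {x} \<notin> W\<close>] by metis
  show ?thesis
  proof (cases "\<forall>G\<in>W. b \<notin> G \<longrightarrow> (\<exists>F\<in>W. b \<in> F \<and> F \<inter> G = {})")
    case True
    then obtain \<D> where "\<D> \<subseteq> W" "infinite \<D>" "{} \<notin> \<D>" "pairwise disjnt \<D>"
      using pratt_comonoid_splitting_disjoint_family[OF pc T1 \<open>b \<in> A\<close> \<open>{b} \<notin> W\<close>] by blast
    then show ?thesis
      by (rule crossword_of_disjoint_family[OF W])
  next
    case False
    then obtain G where "G \<in> W" "b \<notin> G" "\<And>F. F \<in> W \<Longrightarrow> b \<in> F \<Longrightarrow> F \<inter> G \<noteq> {}"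
      by blast
    then obtain M :: "nat \<Rightarrow> 'a set"
      where M: "range M \<subseteq> W" "antimono M" "\<And>n. M n \<noteq> {}" "\<Inter>(range M) = {}"
      using pratt_comonoid_decreasing_chain[OF pc T1 \<open>countable W\<close> \<open>b \<in> A\<close>] by metis
    show ?thesis
      by (rule crossword_of_chains[OF W M(1) E(1) M(2) E(2) M(3,4) E(3)])
  qed
qed

theorem proposition8p6:
  fixes A :: "'a set" and W :: "'a set set"
  assumes "pratt_comonoid A W" and "pratt_T1 A W"
    and "countable W" and "infinite W"
  shows "\<exists>C. crossword A W C \<and> infinite (row C ` A) \<and> infinite (col C ` A)"
proof -
  note pc = assms(1) and W = pratt_comonoid_subset_Pow[OF pc] pratt_comonoid_empty[OF pc]
  have "infinite A"
    using assms(4) W(1) by (meson finite_Pow_iff finite_subset)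
  consider (singletons) "infinite {x\<in>A. {x} \<in> W}" | (cosingletons) "infinite {x\<in>A. A - {x} \<in> W}"
    | (neither) "finite {x\<in>A. {x} \<in> W}" "finite {x\<in>A. A - {x} \<in> W}"
    by blast
  then show ?thesis
  proof cases
    case singletons
    then show ?thesis by (rule crossword_of_singletons[OF W])
  next
    case cosingletons
    then show ?thesis
      by (intro crossword_of_cosingletons[OF pratt_comonoid_carrier[OF pc]]) auto
  next
    case neither
    obtain b where "b \<in> A" "{b} \<notin> W"
      using infinite_imp_nonempty[OF Diff_infinite_finite[OF neither(1) \<open>infinite A\<close>]] by auto
    moreover obtain x where "x \<in> A" "A - {x} \<notin> W"
      using infinite_imp_nonempty[OF Diff_infinite_finite[OF neither(2) \<open>infinite A\<close>]] by auto
    ultimately show ?thesis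
      by (rule pratt_comonoid_crossword_if_singleton_and_cosingleton_missing[OF pc assms(2,3)])
  qed
qed

end
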